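(* Assume Assumptions 1 and 2 hold, $\Delta=\{\delta:\|\delta\|_2\le\varepsilon\}$, and that with probability 1 every gradient $\nabla_\delta h(w,\delta;z)$ evaluated during training satisfies $\|\nabla_\delta h(w,\delta;z)\|\ge1/\psi$ for a constant $\psi>0$. Let $S,S'$ be datasets of size $n$ differing only in one sample $s$, and consider coupled runs of $A_{\text{Fast}}$ with iterates $w_t,w'_t$ and $d^{(w)}_t=\|w_t-w'_t\|$. Then for every step $t$, $$\mathbb E[d^{(w)}_t]\le\big(1+\alpha_{w,t}\beta(1+\tilde\alpha_\delta\varepsilon\psi\beta)\big)\mathbb E[d^{(w)}_{t-1}]+\frac2n\alpha_{w,t}L.$$
   Context: Loss $h(w,\delta;z)$, $w\in W$ Euclidean, Euclidean norms. Assumption 1: for every $z$, and all $w,w'\in W$, $\delta,\delta'\in\Delta$: $|h(w,\delta;z)-h(w',\delta';z)|^2\le L^2(\|w-w'\|^2+\|\delta-\delta'\|^2)$ and $|h(w,\delta;z)-h(w',\delta;z)|\le L_w\|w-w'\|$. Assumption 2: for every $z$, $h(\cdot,\cdot;z)$ is continuously differentiable and $\|\nabla_w h(w,\delta;z)-\nabla_w h(w',\delta';z)\|^2+\|\nabla_\delta h(w,\delta;z)-\nabla_\delta h(w',\delta';z)\|^2\le\beta^2(\|w-w'\|^2+\|\delta-\delta'\|^2)$. Operators: $\mathcal P_\Delta(g)=\arg\min_{\delta\in\Delta}\|g-\delta\|$ and $\pi_\Delta(g)=\varepsilon g/\|g\|$ (the nearest extreme point of $\Delta$). Algorithm $A_{\text{Fast}}$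 (batch size $b$, step sizes $\alpha_{w,t}$, attack step size $\tilde\alpha_\delta$): for $t=1,\dots,T$: draw a uniformly random mini-batch $B_t\subset S$ of size $b$; for each $z_j\in B_t$ draw $\tilde\delta_j$ uniformly in $\Delta$ and set $\delta_j=\mathcal P_\Delta(\tilde\delta_j+\tilde\alpha_\delta\pi_\Delta(\nabla_\delta h(w_{t-1},\tilde\delta_j;z_j)))$; set $w_t=w_{t-1}-\frac{\alpha_{w,t}}{b}\sum_{z_j\in B_t}\nabla_w h(w_{t-1},\delta_j;z_j)$. Coupling: both runs use the same initialization, the same mini-batch index sets (so batches differ only when $s\in B_t$, probability $b/n$) and the same random starts $\tilde\delta_j$. *)

theory Defs
  imports "HOL-Probability.Probability"
begin

abbreviation Delta :: "real \<Rightarrow> 'd::euclidean_space set" where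
  "Delta eps \<equiv> cball 0 eps"

definition proj_Delta :: "real \<Rightarrow> 'd::euclidean_space \<Rightarrow> 'd" where
  "proj_Delta eps g = closest_point (Delta eps) g"

definition pi_Delta :: "real \<Rightarrow> 'd::euclidean_space \<Rightarrow> 'd" where
  "pi_Delta eps g = (eps / norm g) *\<^sub>R g"

text \<open>One step of A_Fast: given current iterate w, mini-batch index set B,
  random starts D j (for sample index j), dataset Z, step size a.\<close>
definition fast_step ::
  "('w::euclidean_space \<Rightarrow> 'd::euclidean_space \<Rightarrow> 'z \<Rightarrow> 'w) \<Rightarrow> ('w \<Rightarrow> 'd \<Rightarrow> 'z \<Rightarrow> 'd) \<Rightarrow>
   real \<Rightarrow> real \<Rightarrow> nat \<Rightarrow> (nat \<Rightarrow> 'z) \<Rightarrow> real \<Rightarrow> 'w \<Rightarrow> nat set \<Rightarrow> (nat \<Rightarrow> 'd) \<Rightarrow> 'w" where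
  "fast_step gw gd eps a_delta b Z a w B D =
     w - (a / real b) *\<^sub>R
       (\<Sum>j\<in>B. gw w (proj_Delta eps (D j + a_delta *\<^sub>R pi_Delta eps (gd w (D j) (Z j)))) (Z j))"

primrec fast_iter ::
  "('w::euclidean_space \<Rightarrow> 'd::euclidean_space \<Rightarrow> 'z \<Rightarrow> 'w) \<Rightarrow> ('w \<Rightarrow> 'd \<Rightarrow> 'z \<Rightarrow> 'd) \<Rightarrow>
   real \<Rightarrow> real \<Rightarrow> nat \<Rightarrow> (nat \<Rightarrow> 'z) \<Rightarrow> (nat \<Rightarrow> real) \<Rightarrow> 'w \<Rightarrow>
   (nat \<Rightarrow> nat set) \<Rightarrow> (nat \<Rightarrow> nat \<Rightarrow> 'd) \<Rightarrow> nat \<Rightarrow> 'w" where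
  "fast_iter gw gd eps a_delta b Z alpha w0 Bs Ds 0 = w0"
| "fast_iter gw gd eps a_delta b Z alpha w0 Bs Ds (Suc t) =
     fast_step gw gd eps a_delta b Z (alpha (Suc t))
       (fast_iter gw gd eps a_delta b Z alpha w0 Bs Ds t) (Bs (Suc t)) (Ds (Suc t))"

definition step_dist :: "nat \<Rightarrow> nat \<Rightarrow> real \<Rightarrow> (nat set \<times> (nat \<Rightarrow> 'd::euclidean_space)) measure" where
  "step_dist n b eps =
     measure_pmf (pmf_of_set {B. B \<subseteq> {..<n} \<and> card B = b})
       \<Otimes>\<^sub>M (\<Pi>\<^sub>M j\<in>{..<n}. uniform_measure lborel (Delta eps))"

end

theory Submission
  imports Defs
begin

text \<open>Fix the randomness and compare one step of the two coupled runs sample by sample.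
  For a sample of the batch other than the replaced one, the two adversarial points differ
  only through the iterate: the projection onto \<open>\<Delta>\<close> is nonexpansive, and on gradients of norm
  at least \<open>1/\<psi>\<close> the map \<open>g \<mapsto> \<epsilon> g/\<parallel>g\<parallel>\<close> is \<open>\<epsilon>\<psi>\<close>-Lipschitz, so the adversarial point moves by at
  most \<open>\<alpha>\<^sub>\<delta>\<epsilon>\<psi>\<beta>\<parallel>w - w'\<parallel>\<close> and the \<open>w\<close>-gradient by at most \<open>\<beta>(1 + \<alpha>\<^sub>\<delta>\<epsilon>\<psi>\<beta>)\<parallel>w - w'\<parallel>\<close>.
  The replaced sample contributes at most \<open>2L\<close>, since the \<open>w\<close>-gradient is bounded by the
  Lipschitz constant of the loss; it lies in the batch with probability \<open>b/n\<close>. Taking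
  expectations of this pointwise recursion gives the claim.\<close>

lemma norm_normalize_diff_le:
  fixes u v :: "'a::real_inner"
  assumes v_pos: "0 < norm v" and v_le_u: "norm v \<le> norm u"
  shows "norm (u /\<^sub>R norm u - v /\<^sub>R norm v) \<le> norm (u - v) / norm v"
proof -
  define a c p where "a = norm u" and "c = norm v" and "p = inner u v"
  have pos: "0 < c" "c \<le> a" using assms by (auto simp: a_def c_def)
  have cs: "p \<le> a * c" unfolding p_def a_def c_def by (rule norm_cauchy_schwarz)
  have sq: "inner u u = a\<^sup>2" "inner v v = c\<^sup>2"
    by (simp_all add: a_def c_def power2_norm_eq_inner)
  have lhs: "(norm (u /\<^sub>R a - v /\<^sub>R c))\<^sup>2 = 2 - 2 * p / (a * c)"
  proof -
    have "(norm (u /\<^sub>R a - v /\<^sub>R c))\<^sup>2 = inner (u /\<^sub>R a - v /\<^sub>R c) (u /\<^sub>R a - v /\<^sub>R c)"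
      by (simp add: power2_norm_eq_inner)
    also have "\<dots> = inner u u / a\<^sup>2 - 2 * p / (a * c) + inner v v / c\<^sup>2"
      by (simp add: inner_diff_left inner_diff_right inner_commute p_def power2_eq_square
          algebra_simps divide_inverse)
    finally have "(norm (u /\<^sub>R a - v /\<^sub>R c))\<^sup>2 = inner u u / a\<^sup>2 - 2 * p / (a * c) + inner v v / c\<^sup>2" .
    then show ?thesis using pos sq by simp
  qed
  have rhs: "(norm (u - v) / c)\<^sup>2 = (a\<^sup>2 + c\<^sup>2 - 2 * p) / c\<^sup>2"
    using sq by (simp add: power_divide power2_norm_eq_inner inner_diff_left inner_diff_right
        inner_commute p_def)
  have "0 \<le> (a - c) * (a * (a + c) - 2 * p)"
  proof (rule mult_nonneg_nonneg)
    have "a * c \<le> a * a" using pos by (intro mult_left_mono) auto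
    then show "0 \<le> a * (a + c) - 2 * p" using cs by (simp add: algebra_simps)
  qed (use pos in simp)
  moreover have "(a\<^sup>2 + c\<^sup>2 - 2 * p) / c\<^sup>2 - (2 - 2 * p / (a * c))
      = (a - c) * (a * (a + c) - 2 * p) / (a * c\<^sup>2)"
    using pos by (simp add: field_simps power2_eq_square)
  ultimately have "(norm (u /\<^sub>R a - v /\<^sub>R c))\<^sup>2 \<le> (norm (u - v) / c)\<^sup>2"
    unfolding lhs rhs using pos by (smt (verit) divide_nonneg_nonneg zero_le_power2 mult_nonneg_nonneg)
  then have "norm (u /\<^sub>R a - v /\<^sub>R c) \<le> norm (u - v) / c"
    by (rule power2_le_imp_le) (use pos in simp)
  then show ?thesis by (simp only: a_def c_def)
qed

lemma norm_scaled_normalize_diff_le: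
  fixes u v :: "'a::real_inner"
  assumes m: "0 < m" "m \<le> norm u" "m \<le> norm v" and e: "0 \<le> e"
  shows "norm ((e / norm u) *\<^sub>R u - (e / norm v) *\<^sub>R v) \<le> e * norm (u - v) / m"
proof -
  have "norm (x /\<^sub>R norm x - y /\<^sub>R norm y) \<le> norm (x - y) / m"
    if "m \<le> norm x" "m \<le> norm y" "norm y \<le> norm x" for x y :: 'a
  proof -
    have "norm (x /\<^sub>R norm x - y /\<^sub>R norm y) \<le> norm (x - y) / norm y"
      using that m by (intro norm_normalize_diff_le) auto
    also have "\<dots> \<le> norm (x - y) / m"
      using that m by (intro divide_left_mono) (auto intro!: mult_pos_pos)
    finally show ?thesis .
  qed
  from this[of u v] this[of v u] m
  have "norm (u /\<^sub>R norm u - v /\<^sub>R norm v) \<le> norm (u - v) / m"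
    by (cases "norm v \<le> norm u") (auto simp: norm_minus_commute)
  moreover have "(e / norm u) *\<^sub>R u - (e / norm v) *\<^sub>R v = e *\<^sub>R (u /\<^sub>R norm u - v /\<^sub>R norm v)"
    by (simp add: scaleR_diff_right divide_inverse)
  ultimately show ?thesis
    using e by (simp add: mult_left_mono[OF _ e, of _ "norm (u - v) / m", simplified])
qed

lemma norm_pi_Delta_diff_le:
  assumes "0 < psi" "0 \<le> eps" "1 / psi \<le> norm g" "1 / psi \<le> norm g'"
  shows "norm (pi_Delta eps g - pi_Delta eps g') \<le> eps * psi * norm (g - g')"
  using norm_scaled_normalize_diff_le[of "1 / psi" g g' eps] assms
  unfolding pi_Delta_def by (simp add: mult_ac)

lemma proj_Delta_in_Delta:
  assumes "0 \<le> eps" shows "proj_Delta eps x \<in> Delta eps"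
  unfolding proj_Delta_def using assms by (intro closest_point_in_set) auto

lemma norm_proj_Delta_diff_le:
  assumes "0 \<le> eps" shows "norm (proj_Delta eps x - proj_Delta eps y) \<le> norm (x - y)"
  using closest_point_lipschitz[of "Delta eps" x y] assms
  unfolding proj_Delta_def dist_norm by auto

lemma norm_gradient_le_lipschitz:
  fixes f :: "'a::real_inner \<Rightarrow> real"
  assumes deriv: "(f has_derivative (\<lambda>v. inner g v)) (at x)"
    and lip: "\<And>y. \<bar>f y - f x\<bar> \<le> L * norm (y - x)" and L: "0 \<le> L"
  shows "norm g \<le> L"
proof (cases "g = 0")
  case False
  define \<phi> where "\<phi> t = f (x + t *\<^sub>R g)" for t :: real
  have line: "((\<lambda>t::real. x + t *\<^sub>R g) has_derivative (\<lambda>t. t *\<^sub>R g)) (at 0)"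
    by (auto intro!: derivative_eq_intros)
  have "(f has_derivative (\<lambda>v. inner g v)) (at ((\<lambda>t::real. x + t *\<^sub>R g) 0))"
    using deriv by simp
  from has_derivative_compose[OF line this]
  have "(\<phi> has_derivative (\<lambda>t. inner g (t *\<^sub>R g))) (at 0)"
    unfolding \<phi>_def by (simp add: o_def)
  then have "(\<phi> has_derivative (\<lambda>t. t * (norm g)\<^sup>2)) (at 0)"
    by (simp add: power2_norm_eq_inner)
  then have "(\<phi> has_field_derivative (norm g)\<^sup>2) (at 0)"
    unfolding has_field_derivative_def by (simp add: mult.commute[of _ "(norm g)\<^sup>2"])
  then have lim: "((\<lambda>t. (\<phi> (0 + t) - \<phi> 0) / t) \<longlongrightarrow> (norm g)\<^sup>2) (at 0)"
    by (simp add: DERIV_def)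
  have "\<forall>\<^sub>F t in at 0. \<bar>(\<phi> (0 + t) - \<phi> 0) / t\<bar> \<le> L * norm g"
    unfolding eventually_at_filter
  proof (intro always_eventually allI impI)
    fix t :: real assume "t \<noteq> 0" "t \<in> UNIV"
    moreover have "\<bar>\<phi> t - \<phi> 0\<bar> \<le> L * norm (t *\<^sub>R g)"
      unfolding \<phi>_def using lip[of "x + t *\<^sub>R g"] by simp
    ultimately show "\<bar>(\<phi> (0 + t) - \<phi> 0) / t\<bar> \<le> L * norm g"
      by (simp add: divide_le_eq mult.commute mult.left_commute)
  qed
  then have "\<bar>(norm g)\<^sup>2\<bar> \<le> L * norm g"
    by (rule tendsto_upperbound[OF tendsto_rabs[OF lim]]) simp
  then show ?thesis using False by (simp add: power2_eq_square)
qed (use L in simp)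

definition fast_attack ::
  "('w \<Rightarrow> 'd::euclidean_space \<Rightarrow> 'z \<Rightarrow> 'd) \<Rightarrow> real \<Rightarrow> real \<Rightarrow> 'w \<Rightarrow> 'd \<Rightarrow> 'z \<Rightarrow> 'd" where
  "fast_attack gd eps a_delta w \<delta> z = proj_Delta eps (\<delta> + a_delta *\<^sub>R pi_Delta eps (gd w \<delta> z))"

lemma fast_step_eq:
  "fast_step gw gd eps a_delta b Z a w B D =
     w - (a / real b) *\<^sub>R (\<Sum>j\<in>B. gw w (fast_attack gd eps a_delta w (D j) (Z j)) (Z j))"
  unfolding fast_step_def fast_attack_def ..

locale smooth_loss =
  fixes h :: "'w::euclidean_space \<Rightarrow> 'd::euclidean_space \<Rightarrow> 'z \<Rightarrow> real"
    and gw :: "'w \<Rightarrow> 'd \<Rightarrow> 'z \<Rightarrow> 'w"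
    and gd :: "'w \<Rightarrow> 'd \<Rightarrow> 'z \<Rightarrow> 'd"
    and L beta eps :: real
  assumes lipschitz: "\<And>z w w' \<delta> \<delta>'. \<delta> \<in> Delta eps \<Longrightarrow> \<delta>' \<in> Delta eps \<Longrightarrow>
        \<bar>h w \<delta> z - h w' \<delta>' z\<bar>\<^sup>2 \<le> L\<^sup>2 * ((norm (w - w'))\<^sup>2 + (norm (\<delta> - \<delta>'))\<^sup>2)"
    and gradient: "\<And>z w \<delta>. ((\<lambda>p. h (fst p) (snd p) z) has_derivative
        (\<lambda>p. inner (gw w \<delta> z) (fst p) + inner (gd w \<delta> z) (snd p))) (at (w, \<delta>))"
    and smooth: "\<And>z w w' \<delta> \<delta>'.
        (norm (gw w \<delta> z - gw w' \<delta>' z))\<^sup>2 + (norm (gd w \<delta> z - gd w' \<delta>' z))\<^sup>2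
          \<le> beta\<^sup>2 * ((norm (w - w'))\<^sup>2 + (norm (\<delta> - \<delta>'))\<^sup>2)"
    and L_nonneg: "0 \<le> L" and beta_nonneg: "0 \<le> beta" and eps_nonneg: "0 \<le> eps"
begin

lemma norm_gw_le:
  assumes "\<delta> \<in> Delta eps" shows "norm (gw w \<delta> z) \<le> L"
proof (rule norm_gradient_le_lipschitz[where f = "\<lambda>w'. h w' \<delta> z" and x = w])
  have "((\<lambda>v. (v, \<delta>)) has_derivative (\<lambda>v. (v, 0))) (at w)"
    by (auto intro!: derivative_eq_intros)
  moreover have "((\<lambda>p. h (fst p) (snd p) z) has_derivative
      (\<lambda>p. inner (gw w \<delta> z) (fst p) + inner (gd w \<delta> z) (snd p))) (at ((\<lambda>v. (v, \<delta>)) w))"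
    using gradient by simp
  ultimately show "((\<lambda>w'. h w' \<delta> z) has_derivative (\<lambda>v. inner (gw w \<delta> z) v)) (at w)"
    by (auto dest: has_derivative_compose simp: o_def)
  fix y
  have "\<bar>h y \<delta> z - h w \<delta> z\<bar>\<^sup>2 \<le> (L * norm (y - w))\<^sup>2"
    using lipschitz[where z = z and w = y and w' = w and \<delta> = \<delta> and \<delta>' = \<delta>] assms by (simp add: power_mult_distrib)
  then show "\<bar>h y \<delta> z - h w \<delta> z\<bar> \<le> L * norm (y - w)"
    by (rule power2_le_imp_le) (use L_nonneg in simp)
qed (rule L_nonneg)

lemma norm_gw_diff_le: "norm (gw w \<delta> z - gw w' \<delta>' z) \<le> beta * (norm (w - w') + norm (\<delta> - \<delta>'))"
proof -
  have "(norm (gw w \<delta> z - gw w' \<delta>' z))\<^sup>2 \<le> beta\<^sup>2 * ((norm (w - w'))\<^sup>2 + (norm (\<delta> - \<delta>'))\<^sup>2)"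
    using smooth[of w \<delta> z w' \<delta>'] zero_le_power2[of "norm (gd w \<delta> z - gd w' \<delta>' z)"] by linarith
  also have "\<dots> \<le> beta\<^sup>2 * (norm (w - w') + norm (\<delta> - \<delta>'))\<^sup>2"
    by (intro mult_left_mono) (auto simp: power2_sum)
  also have "\<dots> = (beta * (norm (w - w') + norm (\<delta> - \<delta>')))\<^sup>2"
    by (simp only: power_mult_distrib)
  finally show ?thesis
    by (rule power2_le_imp_le) (use beta_nonneg in simp)
qed

lemma norm_gd_diff_le: "norm (gd w \<delta> z - gd w' \<delta> z) \<le> beta * norm (w - w')"
proof -
  have "(norm (gw w \<delta> z - gw w' \<delta> z))\<^sup>2 + (norm (gd w \<delta> z - gd w' \<delta> z))\<^sup>2
      \<le> beta\<^sup>2 * (norm (w - w'))\<^sup>2"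
    using smooth[of w \<delta> z w' \<delta>] by simp
  then have "(norm (gd w \<delta> z - gd w' \<delta> z))\<^sup>2 \<le> beta\<^sup>2 * (norm (w - w'))\<^sup>2"
    using zero_le_power2[of "norm (gw w \<delta> z - gw w' \<delta> z)"] by linarith
  also have "\<dots> = (beta * norm (w - w'))\<^sup>2"
    by (simp only: power_mult_distrib)
  finally show ?thesis
    by (rule power2_le_imp_le) (use beta_nonneg in simp)
qed

lemma norm_fast_attack_diff_le:
  assumes psi: "0 < psi" and a: "0 \<le> a_delta"
    and "1 / psi \<le> norm (gd w \<delta> z)" "1 / psi \<le> norm (gd w' \<delta> z)"
  shows "norm (fast_attack gd eps a_delta w \<delta> z - fast_attack gd eps a_delta w' \<delta> z)
    \<le> a_delta * eps * psi * beta * norm (w - w')"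
proof -
  have "norm (fast_attack gd eps a_delta w \<delta> z - fast_attack gd eps a_delta w' \<delta> z)
      \<le> norm (a_delta *\<^sub>R (pi_Delta eps (gd w \<delta> z) - pi_Delta eps (gd w' \<delta> z)))"
    unfolding fast_attack_def scaleR_diff_right
    using norm_proj_Delta_diff_le[OF eps_nonneg] by (metis add_diff_cancel_left)
  also have "\<dots> \<le> a_delta * (eps * psi * norm (gd w \<delta> z - gd w' \<delta> z))"
    using a assms by (auto intro!: mult_left_mono norm_pi_Delta_diff_le eps_nonneg)
  also have "\<dots> \<le> a_delta * (eps * psi * (beta * norm (w - w')))"
    using a psi eps_nonneg by (intro mult_left_mono norm_gd_diff_le) auto
  finally show ?thesis by (simp add: mult_ac)
qed

lemma norm_gw_fast_attack_diff_le:
  assumes "0 < psi" "0 \<le> a_delta"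
    and "1 / psi \<le> norm (gd w \<delta> z)" "1 / psi \<le> norm (gd w' \<delta> z)"
  shows "norm (gw w (fast_attack gd eps a_delta w \<delta> z) z - gw w' (fast_attack gd eps a_delta w' \<delta> z) z)
    \<le> beta * (1 + a_delta * eps * psi * beta) * norm (w - w')"
proof -
  have "norm (gw w (fast_attack gd eps a_delta w \<delta> z) z - gw w' (fast_attack gd eps a_delta w' \<delta> z) z)
      \<le> beta * (norm (w - w') + a_delta * eps * psi * beta * norm (w - w'))"
    using norm_fast_attack_diff_le[OF assms] beta_nonneg
    by (intro order.trans[OF norm_gw_diff_le] mult_left_mono add_left_mono) auto
  then show ?thesis by (simp add: algebra_simps)
qed

lemma norm_gw_fast_attack_diff_le_2L:
  "norm (gw w (fast_attack gd eps a_delta w \<delta> z) z - gw w' (fast_attack gd eps a_delta w' \<delta>' z') z')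
    \<le> 2 * L"
  using norm_triangle_ineq4 norm_gw_le[OF proj_Delta_in_Delta[OF eps_nonneg]]
  unfolding fast_attack_def by (smt (verit))

lemma norm_fast_step_diff_le_sum:
  assumes "0 \<le> a"
  shows "norm (fast_step gw gd eps a_delta b S a w B D - fast_step gw gd eps a_delta b S' a w' B D)
    \<le> norm (w - w') + a / real b * (\<Sum>j\<in>B.
        norm (gw w (fast_attack gd eps a_delta w (D j) (S j)) (S j)
              - gw w' (fast_attack gd eps a_delta w' (D j) (S' j)) (S' j)))"
proof -
  let ?X = "\<lambda>j. gw w (fast_attack gd eps a_delta w (D j) (S j)) (S j)"
  let ?Y = "\<lambda>j. gw w' (fast_attack gd eps a_delta w' (D j) (S' j)) (S' j)"
  have "fast_step gw gd eps a_delta b S a w B D - fast_step gw gd eps a_delta b S' a w' B D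
      = (w - w') - (a / real b) *\<^sub>R (\<Sum>j\<in>B. ?X j - ?Y j)"
    unfolding fast_step_eq by (simp add: sum_subtractf algebra_simps)
  also have "norm \<dots> \<le> norm (w - w') + a / real b * norm (\<Sum>j\<in>B. ?X j - ?Y j)"
    using assms by (simp add: order.trans[OF norm_triangle_ineq4])
  also have "\<dots> \<le> norm (w - w') + a / real b * (\<Sum>j\<in>B. norm (?X j - ?Y j))"
    using assms by (intro add_left_mono mult_left_mono norm_sum) auto
  finally show ?thesis .
qed

lemma norm_fast_step_diff_le:
  assumes psi: "0 < psi" and a: "0 \<le> a" and a_delta: "0 \<le> a_delta"
    and B: "card B = b" "0 < b" and S_S': "\<And>j. j \<noteq> s \<Longrightarrow> S j = S' j"
    and grad: "\<And>j. j \<in> B \<Longrightarrow> 1 / psi \<le> norm (gd w (D j) (S j)) \<and> 1 / psi \<le> norm (gd w' (D j) (S' j))"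
  shows "norm (fast_step gw gd eps a_delta b S a w B D - fast_step gw gd eps a_delta b S' a w' B D)
    \<le> (1 + a * beta * (1 + a_delta * eps * psi * beta)) * norm (w - w')
      + a / real b * (if s \<in> B then 2 * L else 0)"
proof -
  define K where "K = beta * (1 + a_delta * eps * psi * beta)"
  have K: "0 \<le> K" unfolding K_def using beta_nonneg a_delta eps_nonneg psi by auto
  have "norm (gw w (fast_attack gd eps a_delta w (D j) (S j)) (S j)
              - gw w' (fast_attack gd eps a_delta w' (D j) (S' j)) (S' j))
      \<le> K * norm (w - w') + (if j = s then 2 * L else 0)" if "j \<in> B" for j
  proof (cases "j = s")
    case True
    then show ?thesis using norm_gw_fast_attack_diff_le_2L K by (simp add: add_increasing)
  next
    case False
    then show ?thesis
      using norm_gw_fast_attack_diff_le[OF psi a_delta] grad[OF that] S_S'[OF False]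
      unfolding K_def by simp
  qed
  then have "norm (fast_step gw gd eps a_delta b S a w B D - fast_step gw gd eps a_delta b S' a w' B D)
      \<le> norm (w - w') + a / real b * (\<Sum>j\<in>B. K * norm (w - w') + (if j = s then 2 * L else 0))"
    using a by (intro order.trans[OF norm_fast_step_diff_le_sum] add_left_mono mult_left_mono sum_mono) auto
  also have "\<dots> = (1 + a * K) * norm (w - w') + a / real b * (if s \<in> B then 2 * L else 0)"
    using B card_ge_0_finite[of B] by (simp add: sum.distrib sum.delta' field_simps)
  finally show ?thesis unfolding K_def by (simp add: mult.assoc)
qed

lemma norm_fast_step_diff_le_drift:
  assumes "0 \<le> a" "card B = b" "0 < b"
  shows "norm (fast_step gw gd eps a_delta b S a w B D - fast_step gw gd eps a_delta b S' a w' B D)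
    \<le> norm (w - w') + 2 * a * L"
proof -
  have "norm (fast_step gw gd eps a_delta b S a w B D - fast_step gw gd eps a_delta b S' a w' B D)
      \<le> norm (w - w') + a / real b * (\<Sum>j\<in>B. 2 * L)"
    using assms norm_gw_fast_attack_diff_le_2L
    by (intro order.trans[OF norm_fast_step_diff_le_sum] add_left_mono mult_left_mono sum_mono) auto
  also have "\<dots> = norm (w - w') + 2 * a * L"
    using assms by simp
  finally show ?thesis .
qed

lemma norm_fast_iter_diff_le:
  assumes alpha: "\<And>i. 0 \<le> alpha i" and b: "0 < b"
  shows "(\<And>i. i \<in> {1..k} \<Longrightarrow> card (Bs i) = b) \<Longrightarrow>
    norm (fast_iter gw gd eps a_delta b S alpha w0 Bs Ds k - fast_iter gw gd eps a_delta b S' alpha w0 Bs Ds k)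
      \<le> (\<Sum>i=1..k. 2 * alpha i * L)"
proof (induction k)
  case (Suc k)
  let ?d = "\<lambda>k. norm (fast_iter gw gd eps a_delta b S alpha w0 Bs Ds k
                       - fast_iter gw gd eps a_delta b S' alpha w0 Bs Ds k)"
  have "?d (Suc k) \<le> ?d k + 2 * alpha (Suc k) * L"
    unfolding fast_iter.simps using Suc.prems[of "Suc k"] b
    by (intro norm_fast_step_diff_le_drift alpha) auto
  also have "\<dots> \<le> (\<Sum>i=1..k. 2 * alpha i * L) + 2 * alpha (Suc k) * L"
    using Suc by simp
  finally show ?case by simp
qed simp

end

definition batches :: "nat \<Rightarrow> nat \<Rightarrow> nat set set" where
  "batches n b = {B. B \<subseteq> {..<n} \<and> card B = b}"

lemma finite_batches: "finite (batches n b)"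
  unfolding batches_def by (rule finite_subset[of _ "Pow {..<n}"]) auto

lemma batches_nonempty: "b \<le> n \<Longrightarrow> batches n b \<noteq> {}"
  unfolding batches_def by (auto intro!: exI[of _ "{..<b}"])

lemma card_batches_containing:
  assumes "0 < b" "s < n"
  shows "card (batches n b \<inter> {B. s \<in> B}) = (n - 1) choose (b - 1)"
proof -
  let ?V = "{C. C \<subseteq> {..<n} - {s} \<and> card C = b - 1}"
  have eq: "batches n b \<inter> {B. s \<in> B} = insert s ` ?V"
  proof (intro equalityI subsetI)
    fix B assume B: "B \<in> batches n b \<inter> {B. s \<in> B}"
    then have "finite B" unfolding batches_def by (auto intro: finite_subset)
    then have "B - {s} \<in> ?V" using B unfolding batches_def by auto
    moreover have "B = insert s (B - {s})" using B by auto
    ultimately show "B \<in> insert s ` ?V" by blast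
  next
    fix B assume "B \<in> insert s ` ?V"
    then obtain C where C: "C \<in> ?V" "B = insert s C" by auto
    then have "finite C" "s \<notin> C" by (auto intro: finite_subset)
    then show "B \<in> batches n b \<inter> {B. s \<in> B}"
      using C assms unfolding batches_def by auto
  qed
  have inj: "inj_on (insert s) ?V"
    by (intro inj_onI) (metis Diff_insert_absorb Diff_iff insertI1 subset_iff mem_Collect_eq)
  then show ?thesis
    unfolding eq card_image[OF inj] using n_subsets[of "{..<n} - {s}" "b - 1"] assms by simp
qed

lemma measure_pmf_batch_contains:
  assumes "1 \<le> b" "b \<le> n" "s < n"
  shows "measure_pmf.prob (pmf_of_set (batches n b)) {B. s \<in> B} = real b / real n"
proof -
  have "measure_pmf.prob (pmf_of_set (batches n b)) {B. s \<in> B}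
      = real ((n - 1) choose (b - 1)) / real (n choose b)"
    using measure_pmf_of_set[OF batches_nonempty finite_batches] card_batches_containing
      n_subsets[of "{..<n}" b] assms by (simp add: batches_def)
  also have "\<dots> = real b / real n"
  proof -
    have "real b * real (n choose b) = real n * real ((n - 1) choose (b - 1))"
      using times_binomial_minus1_eq[of b n] assms by (metis of_nat_mult less_le_trans zero_less_one)
    then show ?thesis using assms by (simp add: field_simps)
  qed
  finally show ?thesis .
qed

lemma borel_measurable_sum_random_set:
  fixes F :: "nat \<Rightarrow> 'a \<Rightarrow> 'b::euclidean_space"
  assumes Bs: "Bs \<in> M \<rightarrow>\<^sub>M count_space UNIV" and F: "\<And>j. F j \<in> borel_measurable M"
  shows "(\<lambda>\<omega>. \<Sum>j\<in>Bs \<omega>. F j \<omega>) \<in> borel_measurable M"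
proof -
  define N where "N B = (if finite B \<and> B \<noteq> {} then Suc (Max B) else 0)" for B :: "nat set"
  define G where "G i \<omega> = (\<Sum>j<i. if j \<in> Bs \<omega> then F j \<omega> else 0)" for i \<omega>
  \<comment> \<open>a finite set of naturals lies below \<open>N\<close>, so the random sum is a countable family of
     measurable finite sums, selected by the measurable index \<open>N \<circ> Bs\<close>\<close>
  have eq: "(\<Sum>j\<in>Bs \<omega>. F j \<omega>) = G (N (Bs \<omega>)) \<omega>" for \<omega>
  proof (cases "finite (Bs \<omega>) \<and> Bs \<omega> \<noteq> {}")
    case True
    then have "{..<N (Bs \<omega>)} \<inter> Bs \<omega> = Bs \<omega>" unfolding N_def by (auto simp: less_Suc_eq_le)
    then show ?thesis unfolding G_def by (metis sum.inter_restrict finite_lessThan)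
  qed (auto simp: N_def G_def)
  have G: "G i \<in> borel_measurable M" for i
  proof -
    have "Measurable.pred M (\<lambda>\<omega>. j \<in> Bs \<omega>)" for j
      using measurable_compose[OF Bs, of "\<lambda>B. j \<in> B" "count_space UNIV"] by simp
    then show ?thesis
      unfolding G_def by (intro borel_measurable_sum measurable_If F) (auto simp: pred_def)
  qed
  have N: "(\<lambda>\<omega>. N (Bs \<omega>)) \<in> M \<rightarrow>\<^sub>M count_space UNIV"
    using measurable_compose[OF Bs, of N "count_space UNIV"] by simp
  show ?thesis
    unfolding eq by (rule measurable_compose_countable[OF G N])
qed

lemma borel_measurable_fast_attack:
  fixes gd :: "'w::euclidean_space \<Rightarrow> 'd::euclidean_space \<Rightarrow> 'z \<Rightarrow> 'd"
  assumes "continuous_on UNIV (\<lambda>p. gd (fst p) (snd p) z)" "0 \<le> eps"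
    and "W \<in> borel_measurable M" "D \<in> borel_measurable M"
  shows "(\<lambda>\<omega>. fast_attack gd eps a_delta (W \<omega>) (D \<omega>) z) \<in> borel_measurable M"
proof -
  have "(\<lambda>\<omega>. gd (W \<omega>) (D \<omega>) z) \<in> borel_measurable M"
    using borel_measurable_continuous_on[OF assms(1) borel_measurable_Pair[OF assms(3,4)]] by simp
  then have "(\<lambda>\<omega>. D \<omega> + a_delta *\<^sub>R pi_Delta eps (gd (W \<omega>) (D \<omega>) z)) \<in> borel_measurable M"
    using assms(4) unfolding pi_Delta_def by measurable
  then show ?thesis
    unfolding fast_attack_def proj_Delta_def using assms(2)
    by (intro borel_measurable_continuous_on[OF continuous_on_closest_point]) auto
qed

lemma prob_space_uniform_starts:
  assumes "0 < eps"
  shows "prob_space (\<Pi>\<^sub>M j\<in>J. uniform_measure lborel (Delta eps :: 'd::euclidean_space set))"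
proof (intro prob_space_PiM prob_space_uniform_measure)
  have "0 < unit_ball_vol (real DIM('d)) * eps ^ DIM('d)"
    using assms by (intro mult_pos_pos unit_ball_vol_pos) auto
  then show "emeasure lborel (Delta eps :: 'd set) \<noteq> 0"
    using assms by (subst emeasure_cball) (auto simp del: unit_ball_vol_pos)
  show "emeasure lborel (Delta eps :: 'd set) \<noteq> \<infinity>"
    using emeasure_lborel_cball_finite[of "0::'d" eps] by simp
qed

locale fast_sampling = prob_space M
  for M :: "'a measure" and n b :: nat and eps :: real and T :: nat
    and Bs :: "nat \<Rightarrow> 'a \<Rightarrow> nat set" and Ds :: "nat \<Rightarrow> 'a \<Rightarrow> nat \<Rightarrow> 'd::euclidean_space" +
  assumes eps_pos: "0 < eps" and b_pos: "1 \<le> b" and b_le: "b \<le> n"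
    and measurable_step: "\<And>k. k \<in> {1..T} \<Longrightarrow> (\<lambda>\<omega>. (Bs k \<omega>, Ds k \<omega>)) \<in> M \<rightarrow>\<^sub>M step_dist n b eps"
    and distr_step: "\<And>k. k \<in> {1..T} \<Longrightarrow>
        distr M (step_dist n b eps) (\<lambda>\<omega>. (Bs k \<omega>, Ds k \<omega>)) = step_dist n b eps"
begin

abbreviation batch_pmf :: "nat set pmf" where
  "batch_pmf \<equiv> pmf_of_set (batches n b)"

abbreviation starts :: "(nat \<Rightarrow> 'd) measure" where
  "starts \<equiv> \<Pi>\<^sub>M j\<in>{..<n}. uniform_measure lborel (Delta eps)"

lemma step_dist_eq: "step_dist n b eps = measure_pmf batch_pmf \<Otimes>\<^sub>M starts"
  unfolding step_dist_def batches_def ..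

lemma measurable_batch_pmf:
  "k \<in> {1..T} \<Longrightarrow> Bs k \<in> M \<rightarrow>\<^sub>M measure_pmf batch_pmf"
  using measurable_compose[OF measurable_step[unfolded step_dist_eq] measurable_fst] by simp

lemma measurable_batch: "k \<in> {1..T} \<Longrightarrow> Bs k \<in> M \<rightarrow>\<^sub>M count_space UNIV"
  using measurable_batch_pmf by (simp add: measurable_cong_sets[OF refl sets_measure_pmf_count_space])

lemma distr_batch: "k \<in> {1..T} \<Longrightarrow> distr M (measure_pmf batch_pmf) (Bs k) = measure_pmf batch_pmf"
proof -
  assume k: "k \<in> {1..T}"
  have "distr M (measure_pmf batch_pmf) (Bs k)
      = distr (distr M (step_dist n b eps) (\<lambda>\<omega>. (Bs k \<omega>, Ds k \<omega>))) (measure_pmf batch_pmf) fst"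
    using distr_distr[OF _ measurable_step[OF k], of fst] step_dist_eq by (simp add: o_def)
  also have "\<dots> = measure_pmf batch_pmf"
    unfolding distr_step[OF k] unfolding step_dist_eq
    by (rule prob_space.distr_pair_fst[OF prob_space_uniform_starts[OF eps_pos]])
  finally show ?thesis .
qed

lemma borel_measurable_start: "k \<in> {1..T} \<Longrightarrow> (\<lambda>\<omega>. Ds k \<omega> j) \<in> borel_measurable M"
proof -
  assume k: "k \<in> {1..T}"
  have D: "Ds k \<in> M \<rightarrow>\<^sub>M starts"
    using measurable_compose[OF measurable_step[OF k, unfolded step_dist_eq] measurable_snd] by simp
  show ?thesis
  proof (cases "j < n")
    case True
    have "(\<lambda>\<omega>. Ds k \<omega> j) \<in> M \<rightarrow>\<^sub>M uniform_measure lborel (Delta eps :: 'd set)"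
      using measurable_compose[OF D measurable_component_singleton[of j]] True by simp
    then show ?thesis by (simp add: measurable_cong_sets[OF refl sets_uniform_measure])
  next
    case False
    \<comment> \<open>\<open>Ds k \<omega>\<close> is extensional on \<open>{..<n}\<close>, so this coordinate is constantly \<open>undefined\<close>\<close>
    have "Ds k \<omega> j = undefined" if "\<omega> \<in> space M" for \<omega>
      using measurable_space[OF D that] False by (auto simp: space_PiM PiE_def extensional_def)
    then show ?thesis by (subst measurable_cong[where g = "\<lambda>_. undefined"]) auto
  qed
qed

lemma AE_batches: "AE \<omega> in M. \<forall>k\<in>{1..T}. Bs k \<omega> \<in> batches n b"
proof (intro AE_ball_countable')
  fix k assume k: "k \<in> {1..T}"
  have "AE B in measure_pmf batch_pmf. B \<in> batches n b"
    using finite_batches batches_nonempty[OF b_le] by (simp add: AE_measure_pmf_iff)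
  then have "AE B in distr M (measure_pmf batch_pmf) (Bs k). B \<in> batches n b"
    by (subst distr_batch[OF k])
  then show "AE \<omega> in M. Bs k \<omega> \<in> batches n b"
    by (subst (asm) AE_distr_iff[OF measurable_batch_pmf[OF k]]) auto
qed simp

lemma prob_batch_contains:
  assumes "s < n" "k \<in> {1..T}"
  shows "prob {\<omega> \<in> space M. s \<in> Bs k \<omega>} = real b / real n"
proof -
  have "prob {\<omega> \<in> space M. s \<in> Bs k \<omega>} = measure (distr M (measure_pmf batch_pmf) (Bs k)) {B. s \<in> B}"
    by (subst measure_distr[OF measurable_batch_pmf[OF assms(2)]]) (auto intro!: arg_cong[where f = prob])
  then show ?thesis
    using distr_batch[OF assms(2)] measure_pmf_batch_contains b_pos b_le assms(1) by simp
qed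

lemma borel_measurable_fast_iter:
  fixes gw :: "'w::euclidean_space \<Rightarrow> 'd \<Rightarrow> 'z \<Rightarrow> 'w" and gd :: "'w \<Rightarrow> 'd \<Rightarrow> 'z \<Rightarrow> 'd"
  assumes cont: "\<And>z. continuous_on UNIV (\<lambda>p. (gw (fst p) (snd p) z, gd (fst p) (snd p) z))"
  shows "k \<le> T \<Longrightarrow>
    (\<lambda>\<omega>. fast_iter gw gd eps a_delta b Z alpha w0 (\<lambda>i. Bs i \<omega>) (\<lambda>i. Ds i \<omega>) k) \<in> borel_measurable M"
proof (induction k)
  case (Suc k)
  let ?W = "\<lambda>\<omega>. fast_iter gw gd eps a_delta b Z alpha w0 (\<lambda>i. Bs i \<omega>) (\<lambda>i. Ds i \<omega>) k"
  have k: "Suc k \<in> {1..T}" using Suc by simp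
  have W: "?W \<in> borel_measurable M" using Suc by simp
  have "(\<lambda>\<omega>. gw (?W \<omega>) (fast_attack gd eps a_delta (?W \<omega>) (Ds (Suc k) \<omega> j) (Z j)) (Z j))
      \<in> borel_measurable M" for j
  proof -
    have "(\<lambda>\<omega>. fast_attack gd eps a_delta (?W \<omega>) (Ds (Suc k) \<omega> j) (Z j)) \<in> borel_measurable M"
      using continuous_on_snd[OF cont] eps_pos W borel_measurable_start[OF k]
      by (intro borel_measurable_fast_attack) auto
    then show ?thesis
      using borel_measurable_continuous_on[OF continuous_on_fst[OF cont] borel_measurable_Pair[OF W]]
      by simp
  qed
  from borel_measurable_sum_random_set[OF measurable_batch[OF k] this] W
  show ?case unfolding fast_iter.simps fast_step_eq
    by (intro borel_measurable_diff borel_measurable_scaleR borel_measurable_const)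
qed simp

end

lemma (in prob_space) integral_le_affine_indicator:
  fixes f g :: "'a \<Rightarrow> real"
  assumes "integrable M f" "integrable M g" "A \<in> events"
    and "AE x in M. f x \<le> c * g x + K * indicator A x"
  shows "(\<integral>x. f x \<partial>M) \<le> c * (\<integral>x. g x \<partial>M) + K * prob A"
proof -
  have A: "integrable M (indicator A :: 'a \<Rightarrow> real)"
    using assms(3) by (intro integrable_real_indicator) (auto simp: emeasure_eq_measure)
  have "(\<integral>x. f x \<partial>M) \<le> (\<integral>x. c * g x + K * indicator A x \<partial>M)"
    using assms A by (intro integral_mono_AE) auto
  also have "\<dots> = c * (\<integral>x. g x \<partial>M) + K * prob A"
    using assms A by simp
  finally show ?thesis .
qed

locale fast_training = smooth_loss h gw gd L beta eps + fast_sampling M n b eps T Bs Ds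
  for h :: "'w::euclidean_space \<Rightarrow> 'd::euclidean_space \<Rightarrow> 'z \<Rightarrow> real"
    and gw :: "'w \<Rightarrow> 'd \<Rightarrow> 'z \<Rightarrow> 'w" and gd :: "'w \<Rightarrow> 'd \<Rightarrow> 'z \<Rightarrow> 'd"
    and L beta eps :: real and M :: "'a measure" and n b T :: nat
    and Bs :: "nat \<Rightarrow> 'a \<Rightarrow> nat set" and Ds :: "nat \<Rightarrow> 'a \<Rightarrow> nat \<Rightarrow> 'd" +
  assumes gradient_continuous:
    "\<And>z. continuous_on UNIV (\<lambda>p. (gw (fst p) (snd p) z, gd (fst p) (snd p) z))"
begin

abbreviation iter :: "real \<Rightarrow> (nat \<Rightarrow> 'z) \<Rightarrow> (nat \<Rightarrow> real) \<Rightarrow> 'w \<Rightarrow> nat \<Rightarrow> 'a \<Rightarrow> 'w" where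
  "iter a_delta Z alpha w0 k \<omega> \<equiv> fast_iter gw gd eps a_delta b Z alpha w0 (\<lambda>i. Bs i \<omega>) (\<lambda>i. Ds i \<omega>) k"

lemma integrable_norm_iter_diff:
  assumes "\<And>i. 0 \<le> alpha i" "k \<le> T"
  shows "integrable M (\<lambda>\<omega>. norm (iter a_delta S alpha w0 k \<omega> - iter a_delta S' alpha w0 k \<omega>))"
proof (rule integrable_const_bound)
  show "AE \<omega> in M. norm (norm (iter a_delta S alpha w0 k \<omega> - iter a_delta S' alpha w0 k \<omega>))
      \<le> (\<Sum>i=1..k. 2 * alpha i * L)"
    using AE_batches
  proof eventually_elim
    case (elim \<omega>)
    show ?case
      unfolding real_norm_def abs_norm_cancel
      by (rule norm_fast_iter_diff_le) (use elim assms b_pos in \<open>auto simp: batches_def\<close>)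
  qed
  show "(\<lambda>\<omega>. norm (iter a_delta S alpha w0 k \<omega> - iter a_delta S' alpha w0 k \<omega>)) \<in> borel_measurable M"
    using borel_measurable_fast_iter[OF gradient_continuous assms(2)] by measurable
qed

lemma AE_norm_iter_diff_step:
  assumes psi: "0 < psi" and alpha: "\<And>i. 0 \<le> alpha i" and a_delta: "0 \<le> a_delta"
    and S_S': "\<And>j. j \<noteq> s \<Longrightarrow> S j = S' j" and t: "t \<in> {1..T}"
    and grad: "AE \<omega> in M. \<forall>j\<in>Bs t \<omega>.
        1 / psi \<le> norm (gd (iter a_delta S alpha w0 (t - 1) \<omega>) (Ds t \<omega> j) (S j))
      \<and> 1 / psi \<le> norm (gd (iter a_delta S' alpha w0 (t - 1) \<omega>) (Ds t \<omega> j) (S' j))"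
  shows "AE \<omega> in M. norm (iter a_delta S alpha w0 t \<omega> - iter a_delta S' alpha w0 t \<omega>)
    \<le> (1 + alpha t * beta * (1 + a_delta * eps * psi * beta))
        * norm (iter a_delta S alpha w0 (t - 1) \<omega> - iter a_delta S' alpha w0 (t - 1) \<omega>)
      + alpha t / real b * (2 * L) * indicator {\<omega> \<in> space M. s \<in> Bs t \<omega>} \<omega>"
  using AE_batches grad AE_space
proof eventually_elim
  case (elim \<omega>)
  have step: "iter a_delta Z alpha w0 t \<omega>
      = fast_step gw gd eps a_delta b Z (alpha t) (iter a_delta Z alpha w0 (t - 1) \<omega>) (Bs t \<omega>) (Ds t \<omega>)"
    for Z using t by (cases t) auto
  have card: "card (Bs t \<omega>) = b" using elim(1) t by (auto simp: batches_def)
  have "norm (iter a_delta S alpha w0 t \<omega> - iter a_delta S' alpha w0 t \<omega>)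
    \<le> (1 + alpha t * beta * (1 + a_delta * eps * psi * beta))
        * norm (iter a_delta S alpha w0 (t - 1) \<omega> - iter a_delta S' alpha w0 (t - 1) \<omega>)
      + alpha t / real b * (if s \<in> Bs t \<omega> then 2 * L else 0)"
    unfolding step
    by (rule norm_fast_step_diff_le[OF psi alpha a_delta card _ S_S']) (use elim(2) b_pos in auto)
  then show ?case using elim(3) by (simp add: indicator_def split: if_splits)
qed

end

theorem lemma7:
  fixes h :: "'w::euclidean_space \<Rightarrow> 'd::euclidean_space \<Rightarrow> 'z \<Rightarrow> real"
    and gw :: "'w \<Rightarrow> 'd \<Rightarrow> 'z \<Rightarrow> 'w"
    and gd :: "'w \<Rightarrow> 'd \<Rightarrow> 'z \<Rightarrow> 'd"
    and L Lw beta eps psi a_delta :: real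
    and alpha :: "nat \<Rightarrow> real"
    and n b s T t :: nat
    and S S' :: "nat \<Rightarrow> 'z"
    and w0 :: 'w
    and M :: "'a measure"
    and Bs :: "nat \<Rightarrow> 'a \<Rightarrow> nat set"
    and Ds :: "nat \<Rightarrow> 'a \<Rightarrow> nat \<Rightarrow> 'd"
  assumes A1: "\<And>z w w' \<delta> \<delta>'. \<delta> \<in> Delta eps \<Longrightarrow> \<delta>' \<in> Delta eps \<Longrightarrow>
        \<bar>h w \<delta> z - h w' \<delta>' z\<bar>\<^sup>2 \<le> L\<^sup>2 * ((norm (w - w'))\<^sup>2 + (norm (\<delta> - \<delta>'))\<^sup>2)"
    and A1w: "\<And>z w w' \<delta>. \<delta> \<in> Delta eps \<Longrightarrow> \<bar>h w \<delta> z - h w' \<delta> z\<bar> \<le> Lw * norm (w - w')"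
    and A2_deriv: "\<And>z w \<delta>. ((\<lambda>p. h (fst p) (snd p) z) has_derivative
           (\<lambda>p. inner (gw w \<delta> z) (fst p) + inner (gd w \<delta> z) (snd p))) (at (w, \<delta>))"
    and A2_cont: "\<And>z. continuous_on UNIV (\<lambda>p. (gw (fst p) (snd p) z, gd (fst p) (snd p) z))"
    and A2: "\<And>z w w' \<delta> \<delta>'.
        (norm (gw w \<delta> z - gw w' \<delta>' z))\<^sup>2 + (norm (gd w \<delta> z - gd w' \<delta>' z))\<^sup>2
          \<le> beta\<^sup>2 * ((norm (w - w'))\<^sup>2 + (norm (\<delta> - \<delta>'))\<^sup>2)"
    and L_nonneg: "0 \<le> L" and beta_nonneg: "0 \<le> beta"
    and eps_pos: "0 < eps" and psi_pos: "0 < psi"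
    and step_nonneg: "\<And>k. 0 \<le> alpha k" and a_delta_nonneg: "0 \<le> a_delta"
    and b_pos: "1 \<le> b" and b_le: "b \<le> n"
    and s_lt: "s < n" and S_S': "\<And>j. j \<noteq> s \<Longrightarrow> S j = S' j"
    and M: "prob_space M"
    and rv: "\<And>k. k \<in> {1..T} \<Longrightarrow> (\<lambda>\<omega>. (Bs k \<omega>, Ds k \<omega>)) \<in> measurable M (step_dist n b eps)"
    and dist: "\<And>k. k \<in> {1..T} \<Longrightarrow> distr M (step_dist n b eps) (\<lambda>\<omega>. (Bs k \<omega>, Ds k \<omega>)) = step_dist n b eps"
    and indep: "prob_space.indep_vars M (\<lambda>_. step_dist n b eps) (\<lambda>k \<omega>. (Bs k \<omega>, Ds k \<omega>)) {1..T}"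
    and grad_lb: "AE \<omega> in M. \<forall>k\<in>{1..T}. \<forall>j\<in>Bs k \<omega>.
        norm (gd (fast_iter gw gd eps a_delta b S alpha w0 (\<lambda>i. Bs i \<omega>) (\<lambda>i. Ds i \<omega>) (k - 1)) (Ds k \<omega> j) (S j)) \<ge> 1 / psi
      \<and> norm (gd (fast_iter gw gd eps a_delta b S' alpha w0 (\<lambda>i. Bs i \<omega>) (\<lambda>i. Ds i \<omega>) (k - 1)) (Ds k \<omega> j) (S' j)) \<ge> 1 / psi"
    and t_range: "t \<in> {1..T}"
  shows "(\<integral>\<omega>. norm (fast_iter gw gd eps a_delta b S alpha w0 (\<lambda>i. Bs i \<omega>) (\<lambda>i. Ds i \<omega>) t
                    - fast_iter gw gd eps a_delta b S' alpha w0 (\<lambda>i. Bs i \<omega>) (\<lambda>i. Ds i \<omega>) t) \<partial>M)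
         \<le> (1 + alpha t * beta * (1 + a_delta * eps * psi * beta)) *
             (\<integral>\<omega>. norm (fast_iter gw gd eps a_delta b S alpha w0 (\<lambda>i. Bs i \<omega>) (\<lambda>i. Ds i \<omega>) (t - 1)
                    - fast_iter gw gd eps a_delta b S' alpha w0 (\<lambda>i. Bs i \<omega>) (\<lambda>i. Ds i \<omega>) (t - 1)) \<partial>M)
           + 2 / real n * alpha t * L"
proof -
  interpret fast_training h gw gd L beta eps M n b T Bs Ds
    by (intro fast_training.intro smooth_loss.intro fast_sampling.intro fast_sampling_axioms.intro
        fast_training_axioms.intro A1 A2_deriv A2 L_nonneg beta_nonneg M b_pos b_le rv dist A2_cont
        eps_pos less_imp_le) auto
  let ?d = "\<lambda>k \<omega>. norm (iter a_delta S alpha w0 k \<omega> - iter a_delta S' alpha w0 k \<omega>)"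
  let ?A = "{\<omega> \<in> space M. s \<in> Bs t \<omega>}"
  have "AE \<omega> in M. ?d t \<omega> \<le> (1 + alpha t * beta * (1 + a_delta * eps * psi * beta)) * ?d (t - 1) \<omega>
      + alpha t / real b * (2 * L) * indicator ?A \<omega>"
    using grad_lb t_range
    by (intro AE_norm_iter_diff_step psi_pos step_nonneg a_delta_nonneg S_S') (auto elim!: AE_mp)
  moreover have "?A \<in> events"
    using measurable_sets[OF measurable_batch[OF t_range], of "{B. s \<in> B}"]
    by (simp add: vimage_def Int_def conj_commute)
  ultimately have "(\<integral>\<omega>. ?d t \<omega> \<partial>M) \<le> (1 + alpha t * beta * (1 + a_delta * eps * psi * beta))
      * (\<integral>\<omega>. ?d (t - 1) \<omega> \<partial>M) + alpha t / real b * (2 * L) * prob ?A"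
    using t_range by (intro integral_le_affine_indicator integrable_norm_iter_diff step_nonneg) auto
  also have "alpha t / real b * (2 * L) * prob ?A = 2 / real n * alpha t * L"
    using prob_batch_contains[OF s_lt t_range] b_pos by (simp add: field_simps)
  finally show ?thesis .
qed

end
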